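(* Let $\mathfrak{C}=(U,M,I,N,J)$ be a formal decision context, $\mathfrak{C}^c=(U,M,I,N,\neg J)$ its complement, and $E\subseteq M$. Then: (1) $E$ is a II-consistent set of $\mathfrak{C}$ if and only if $E$ is an I-consistent set of $\mathfrak{C}^c$; (2) $E$ is a II-reduction of $\mathfrak{C}$ if and only if $E$ is an I-reduction of $\mathfrak{C}^c$.
   Context: Formal context $(U,M,I)$: $U$ and $M$ are finite nonempty sets and $I\subseteq U\times M$. For $O\subseteq U$ and $C\subseteq M$ define: - $O^{\uparrow}=\{a\mid\forall x\in O\,((x,a)\in I)\}$ and $C^{\downarrow}=\{x\mid\forall a\in C\,((x,a)\in I)\}$; - $O^{\lozenge}=\{a\in M\mid\exists x\in O\,((x,a)\in I)\}$ and $C^{\square}=\{x\in U\mid\forall a\in M\,((x,a)\in I\Rightarrow a\in C)\}$; - $O^{\square}=\{a\in M\mid\forall x\in U\,((x,a)\in I\Rightarrow x\in O)\}$ and $C^{\lozenge}=\{x\in U\mid\exists a\in C\,((x,a)\in I)\}$. The corresponding pairs are: formal concepts $(O,C)$ with $O^\uparrow=C$ and $C^\downarrow=O$ (set $L$); object-oriented concepts with $O^\square=C$ and $C^\lozenge=O$ (set $L_O$); property-oriented concepts with $O^\lozenge=C$ and $C^\square=O$ (set $L_P$). A formal decision context $\mathfrak{C}=(U,M,I,N,J)$ has conditional context $(U,M,I)$ and decision context $(U,N,J)$, with $M\cap N=\emptyset$. Its complement is $\mathfrak{C}^c=(U,M,I,N,\neg J)$, where $(x,t)\in\neg J$ iff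 $(x,t)\notin J$. For $E\subseteq M$, put $I_E=I\cap(U\times E)$; the subcontext $\mathfrak{C}(E)=(U,E,I_E,N,J)$ has conditional context $(U,E,I_E)$. An I-decision rule of a formal decision context is $(O,C)\rightarrow(Y,D)$ with $(O,C)\in L_O$ of its conditional context, $(Y,D)\in L$ of its decision context, $O\subseteq Y$, $O\ne\emptyset$ and $Y\ne U$. A II-decision rule is $(O,C)\rightarrow(Y,D)$ with $(O,C)\in L_O$ of its conditional context, $(Y,D)\in L_P$ of its decision context, $O\subseteq Y$, and (as the paper restricts II-rules in applications) $O\ne\emptyset$ and $Y\ne U$. $\mathfrak{R}_I(\cdot)$ and $\mathfrak{R}_{II}(\cdot)$ denote the sets of these rules. For a rule $(O,C)\rightarrow(Y,D)$ of $\mathfrak{C}(E)$ (respectively $\mathfrak{C}^c(E)=(U,E,I_E,N,\neg J)$) and a rule $(O_1,C_1)\rightarrow(Y_1,D_1)$ of $\mathfrak{C}$ (respectively $\mathfrak{C}^c$) of the same kind, the first implies the second iff $O_1\subseteq O\subseteq Y\subseteq Y_1$. $E$ is II-consistent for $\mathfrak{C}$ if every rule in $\mathfrak{R}_{II}(\mathfrak{C})$ is implied by some rule in $\mathfrak{R}_{II}(\mathfrak{C}(E))$. $E$ is I-consistent for $\mathfrak{C}^c$ if every rule in $\mathfrak{R}_I(\mathfrak{C}^c)$ is implied by some rule in $\mathfrak{R}_I(\mathfrak{C}^c(E))$. A II-reduction (I-reduction) is a II-consistent (I-consistent) set none of whose proper subsets is II-consistent (I-consistent). *)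

theory Defs
  imports Main
begin

definition formal_context :: "'u set \<Rightarrow> 'm set \<Rightarrow> ('u \<times> 'm) set \<Rightarrow> bool" where
  "formal_context U M I \<longleftrightarrow> finite U \<and> U \<noteq> {} \<and> finite M \<and> M \<noteq> {} \<and> I \<subseteq> U \<times> M"

definition formal_decision_context ::
  "'u set \<Rightarrow> 'm set \<Rightarrow> ('u \<times> 'm) set \<Rightarrow> 'n set \<Rightarrow> ('u \<times> 'n) set \<Rightarrow> bool" where
  "formal_decision_context U M I N J \<longleftrightarrow> formal_context U M I \<and> formal_context U N J"

definition obj_up :: "'u set \<Rightarrow> 'm set \<Rightarrow> ('u \<times> 'm) set \<Rightarrow> 'u set \<Rightarrow> 'm set" where
  "obj_up U M I X = {a \<in> M. \<forall>x\<in>X. (x, a) \<in> I}"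
definition attr_down :: "'u set \<Rightarrow> 'm set \<Rightarrow> ('u \<times> 'm) set \<Rightarrow> 'm set \<Rightarrow> 'u set" where
  "attr_down U M I C = {x \<in> U. \<forall>a\<in>C. (x, a) \<in> I}"

definition obj_dia :: "'u set \<Rightarrow> 'm set \<Rightarrow> ('u \<times> 'm) set \<Rightarrow> 'u set \<Rightarrow> 'm set" where
  "obj_dia U M I X = {a \<in> M. \<exists>x\<in>X. (x, a) \<in> I}"
definition attr_box :: "'u set \<Rightarrow> 'm set \<Rightarrow> ('u \<times> 'm) set \<Rightarrow> 'm set \<Rightarrow> 'u set" where
  "attr_box U M I C = {x \<in> U. \<forall>a\<in>M. (x, a) \<in> I \<longrightarrow> a \<in> C}"

definition obj_box :: "'u set \<Rightarrow> 'm set \<Rightarrow> ('u \<times> 'm) set \<Rightarrow> 'u set \<Rightarrow> 'm set" where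
  "obj_box U M I X = {a \<in> M. \<forall>x\<in>U. (x, a) \<in> I \<longrightarrow> x \<in> X}"
definition attr_dia :: "'u set \<Rightarrow> 'm set \<Rightarrow> ('u \<times> 'm) set \<Rightarrow> 'm set \<Rightarrow> 'u set" where
  "attr_dia U M I C = {x \<in> U. \<exists>a\<in>C. (x, a) \<in> I}"

definition concepts :: "'u set \<Rightarrow> 'm set \<Rightarrow> ('u \<times> 'm) set \<Rightarrow> ('u set \<times> 'm set) set" where
  "concepts U M I = {(X, C). obj_up U M I X = C \<and> attr_down U M I C = X}"
definition oo_concepts :: "'u set \<Rightarrow> 'm set \<Rightarrow> ('u \<times> 'm) set \<Rightarrow> ('u set \<times> 'm set) set" where
  "oo_concepts U M I = {(X, C). obj_box U M I X = C \<and> attr_dia U M I C = X}"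
definition po_concepts :: "'u set \<Rightarrow> 'm set \<Rightarrow> ('u \<times> 'm) set \<Rightarrow> ('u set \<times> 'm set) set" where
  "po_concepts U M I = {(X, C). obj_dia U M I X = C \<and> attr_box U M I C = X}"

definition neg_rel :: "'u set \<Rightarrow> 'n set \<Rightarrow> ('u \<times> 'n) set \<Rightarrow> ('u \<times> 'n) set" where
  "neg_rel U N J = (U \<times> N) - J"
definition restrict_rel :: "'u set \<Rightarrow> ('u \<times> 'm) set \<Rightarrow> 'm set \<Rightarrow> ('u \<times> 'm) set" where
  "restrict_rel U I E = I \<inter> (U \<times> E)"

type_synonym ('u, 'm, 'n) rule = "('u set \<times> 'm set) \<times> ('u set \<times> 'n set)"

definition rules_I ::
  "'u set \<Rightarrow> 'm set \<Rightarrow> ('u \<times> 'm) set \<Rightarrow> 'n set \<Rightarrow> ('u \<times> 'n) set \<Rightarrow> ('u, 'm, 'n) rule set" where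
  "rules_I U M I N J = {((X, C), (Y, D)). (X, C) \<in> oo_concepts U M I \<and> (Y, D) \<in> concepts U N J
      \<and> X \<subseteq> Y \<and> X \<noteq> {} \<and> Y \<noteq> U}"

definition rules_II ::
  "'u set \<Rightarrow> 'm set \<Rightarrow> ('u \<times> 'm) set \<Rightarrow> 'n set \<Rightarrow> ('u \<times> 'n) set \<Rightarrow> ('u, 'm, 'n) rule set" where
  "rules_II U M I N J = {((X, C), (Y, D)). (X, C) \<in> oo_concepts U M I \<and> (Y, D) \<in> po_concepts U N J
      \<and> X \<subseteq> Y \<and> X \<noteq> {} \<and> Y \<noteq> U}"

definition rule_implies :: "('u, 'm, 'n) rule \<Rightarrow> ('u, 'm, 'n) rule \<Rightarrow> bool" where
  "rule_implies r r1 \<longleftrightarrow>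
     (let X = fst (fst r); Y = fst (snd r); X1 = fst (fst r1); Y1 = fst (snd r1)
      in X1 \<subseteq> X \<and> X \<subseteq> Y \<and> Y \<subseteq> Y1)"

definition II_consistent ::
  "'u set \<Rightarrow> 'm set \<Rightarrow> ('u \<times> 'm) set \<Rightarrow> 'n set \<Rightarrow> ('u \<times> 'n) set \<Rightarrow> 'm set \<Rightarrow> bool" where
  "II_consistent U M I N J E \<longleftrightarrow>
     (\<forall>r1 \<in> rules_II U M I N J. \<exists>r \<in> rules_II U E (restrict_rel U I E) N J. rule_implies r r1)"

definition I_consistent ::
  "'u set \<Rightarrow> 'm set \<Rightarrow> ('u \<times> 'm) set \<Rightarrow> 'n set \<Rightarrow> ('u \<times> 'n) set \<Rightarrow> 'm set \<Rightarrow> bool" where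
  "I_consistent U M I N J E \<longleftrightarrow>
     (\<forall>r1 \<in> rules_I U M I N J. \<exists>r \<in> rules_I U E (restrict_rel U I E) N J. rule_implies r r1)"

definition II_reduction ::
  "'u set \<Rightarrow> 'm set \<Rightarrow> ('u \<times> 'm) set \<Rightarrow> 'n set \<Rightarrow> ('u \<times> 'n) set \<Rightarrow> 'm set \<Rightarrow> bool" where
  "II_reduction U M I N J E \<longleftrightarrow>
     II_consistent U M I N J E \<and> (\<forall>F. F \<subset> E \<longrightarrow> \<not> II_consistent U M I N J F)"

definition I_reduction ::
  "'u set \<Rightarrow> 'm set \<Rightarrow> ('u \<times> 'm) set \<Rightarrow> 'n set \<Rightarrow> ('u \<times> 'n) set \<Rightarrow> 'm set \<Rightarrow> bool" where
  "I_reduction U M I N J E \<longleftrightarrow>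
     I_consistent U M I N J E \<and> (\<forall>F. F \<subset> E \<longrightarrow> \<not> I_consistent U M I N J F)"

end

theory Submission
  imports Defs
begin

text \<open>For \<open>Y \<subseteq> U\<close> an attribute belongs to every object of \<open>Y\<close> in \<open>\<not>J\<close> exactly when it
  belongs to none of them in \<open>J\<close>, so \<open>Y\<^sup>\<up>\<close> in \<open>\<not>J\<close> is \<open>N - Y\<^sup>\<diamond>\<close> and \<open>(N - D)\<^sup>\<down>\<close> in \<open>\<not>J\<close>
  is \<open>D\<^sup>\<box>\<close>. Thus \<open>(Y, D) \<mapsto> (Y, N - D)\<close> maps the property-oriented concepts of \<open>(U, N, J)\<close>
  onto the formal concepts of \<open>(U, N, \<not>J)\<close>, and hence the II-rules of any conditional context
  onto the I-rules of its complement, without changing extents. Rule implication only compares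
  extents, so consistency and reductions transfer.\<close>

lemma obj_up_neg_rel:
  "Y \<subseteq> U \<Longrightarrow> obj_up U N (neg_rel U N J) Y = N - obj_dia U N J Y"
  by (auto simp: obj_up_def obj_dia_def neg_rel_def)

lemma attr_down_neg_rel:
  "D \<subseteq> N \<Longrightarrow> attr_down U N (neg_rel U N J) D = attr_box U N J (N - D)"
  by (auto simp: attr_down_def attr_box_def neg_rel_def)

lemma concepts_neg_rel:
  "concepts U N (neg_rel U N J) = apsnd (\<lambda>D. N - D) ` po_concepts U N J"
proof (intro equalityI subsetI)
  fix c assume c: "c \<in> concepts U N (neg_rel U N J)"
  obtain Y D where YD: "c = (Y, D)"
    by fastforce
  have Y: "attr_down U N (neg_rel U N J) D = Y" and D: "obj_up U N (neg_rel U N J) Y = D"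
    using c by (simp_all add: YD concepts_def)
  have "Y \<subseteq> U"
    using Y by (auto simp: attr_down_def)
  have "D \<subseteq> N"
    using D by (auto simp: obj_up_def)
  have "obj_dia U N J Y = N - D"
    using D \<open>Y \<subseteq> U\<close> by (auto simp: obj_up_neg_rel obj_dia_def)
  then have "(Y, N - D) \<in> po_concepts U N J"
    using Y \<open>D \<subseteq> N\<close> by (simp add: po_concepts_def attr_down_neg_rel)
  moreover have "c = apsnd (\<lambda>D. N - D) (Y, N - D)"
    using YD \<open>D \<subseteq> N\<close> by (simp add: double_diff)
  ultimately show "c \<in> apsnd (\<lambda>D. N - D) ` po_concepts U N J"
    by blast
next
  fix c assume "c \<in> apsnd (\<lambda>D. N - D) ` po_concepts U N J"
  then obtain Y D where YD: "c = (Y, N - D)" and po: "(Y, D) \<in> po_concepts U N J"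
    by fastforce
  have Y: "attr_box U N J D = Y" and D: "obj_dia U N J Y = D"
    using po by (simp_all add: po_concepts_def)
  have "Y \<subseteq> U"
    using Y by (auto simp: attr_box_def)
  have "D \<subseteq> N"
    using D by (auto simp: obj_dia_def)
  show "c \<in> concepts U N (neg_rel U N J)"
    using Y D \<open>Y \<subseteq> U\<close> \<open>D \<subseteq> N\<close>
    by (simp add: YD concepts_def obj_up_neg_rel attr_down_neg_rel double_diff)
qed

lemma rules_I_neg_rel:
  "rules_I U M I N (neg_rel U N J) = apsnd (apsnd (\<lambda>D. N - D)) ` rules_II U M I N J"
proof (intro equalityI subsetI)
  fix r assume r: "r \<in> rules_I U M I N (neg_rel U N J)"
  obtain X C Y D' where r_eq: "r = ((X, C), (Y, D'))"
    by (metis prod.collapse)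
  have "(Y, D') \<in> apsnd (\<lambda>D. N - D) ` po_concepts U N J"
    using r by (simp add: r_eq rules_I_def concepts_neg_rel)
  then obtain D where "D' = N - D" and "(Y, D) \<in> po_concepts U N J"
    by auto
  then show "r \<in> apsnd (apsnd (\<lambda>D. N - D)) ` rules_II U M I N J"
    using r by (intro image_eqI[of _ _ "((X, C), (Y, D))"]) (simp_all add: r_eq rules_I_def rules_II_def)
next
  fix r assume "r \<in> apsnd (apsnd (\<lambda>D. N - D)) ` rules_II U M I N J"
  then obtain X C Y D where r_eq: "r = ((X, C), (Y, N - D))"
    and r: "((X, C), (Y, D)) \<in> rules_II U M I N J"
    by auto
  have "(Y, D) \<in> po_concepts U N J"
    using r by (simp add: rules_II_def)
  then have "(Y, N - D) \<in> concepts U N (neg_rel U N J)"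
    unfolding concepts_neg_rel by (rule rev_image_eqI) simp
  then show "r \<in> rules_I U M I N (neg_rel U N J)"
    using r by (simp add: r_eq rules_I_def rules_II_def)
qed

lemma rule_implies_apsnd_apsnd [simp]:
  "rule_implies (apsnd (apsnd f) r) (apsnd (apsnd f) r1) \<longleftrightarrow> rule_implies r r1"
  by (simp add: rule_implies_def)

lemma I_consistent_neg_rel_iff:
  "I_consistent U M I N (neg_rel U N J) E \<longleftrightarrow> II_consistent U M I N J E"
  by (simp add: I_consistent_def II_consistent_def rules_I_neg_rel)

theorem theorem4p10:
  fixes U :: "'u set" and M :: "'m set" and I :: "('u \<times> 'm) set"
    and N :: "'n set" and J :: "('u \<times> 'n) set" and E :: "'m set"
  assumes "formal_decision_context U M I N J"
    and "E \<subseteq> M"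
  shows "(II_consistent U M I N J E \<longleftrightarrow> I_consistent U M I N (neg_rel U N J) E)
       \<and> (II_reduction U M I N J E \<longleftrightarrow> I_reduction U M I N (neg_rel U N J) E)"
  by (simp add: I_consistent_neg_rel_iff II_reduction_def I_reduction_def)

end
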